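(* Assume (A1), (A2), (A6) together with: (a) $A\perp\{Y(1,1),Y(1,0),M(0),M(1)\}\mid X$; (b) $\{M(0),M(1)\}\perp\{Y(1,0),Y(1,1)\}\mid X$; (c) there is $\epsilon>0$ with $P\{P(A=1,M=m\mid X)\ge\epsilon\}=1$ for $m=0,1$ and $P\{P(A=0\mid X)\ge\epsilon\}=1$. Then for (almost) every $x$, $$\psi(x) = P(Y(1,0)=0\mid Y(1,1)=1,X=x)\,P(M(0)=0\mid M(1)=1,X=x) = \Big[1-\frac{\mu_{10}(x)}{\mu_{11}(x)}\Big]\Big[1-\frac{\gamma_0(x)}{\gamma_1(x)}\Big].$$
   Context: Observed data $O=(X,A,M,Y)$ with covariates $X\in\mathbb{R}^d$, binary exposure $A$, binary mediator $M$, binary outcome $Y$. For $a,m\in\{0,1\}$, $Y(a,m)$ is the potential outcome under $A=a,M=m$, $M(a)$ the potential mediator, $Y(a):=Y(a,M(a))$, cross-world $Y(a,M(a'))$ by substitution, all on a common probability space with $O$. $\mu_{am}(x)=P(Y=1\mid A=a,M=m,X=x)$, $\gamma_a(x)=P(M=1\mid A=a,X=x)$. $\psi(x)=P(Y(1,M(0))=0,\,Y(0,M(0))=0\mid Y(1,M(1))=1,M(1)=1,X=x)$. (A1) consistency: $A=a,M=m\Rightarrow Y=Y(a,m)$ and $A=a\Rightarrow M=M(a)$. (A2) monotonicity: $Y(1,1)\ge Y(1,0)\ge Y(0,0)$, $Y(1,1)\ge Y(0,1)$, $M(1)\ge M(0)$. (A6) $P\{P(Y=1\mid A=1,M=1,X)\ge\epsilon\}=1$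 for some $\epsilon>0$. *)

theory Defs
  imports "HOL-Probability.Probability"
begin

text \<open>Conditional probability of the event E given the covariate X, as a version of
  E[1_E | sigma(X)] (a function of the sample point, measurable w.r.t. sigma(X)).\<close>
definition cpX :: "'a measure \<Rightarrow> ('a \<Rightarrow> 'x::topological_space) \<Rightarrow> ('a \<Rightarrow> bool) \<Rightarrow> 'a \<Rightarrow> real" where
  "cpX M X E = real_cond_exp M (vimage_algebra (space M) X borel) (indicator {w \<in> space M. E w})"

definition cpXB :: "'a measure \<Rightarrow> ('a \<Rightarrow> 'x::topological_space) \<Rightarrow> ('a \<Rightarrow> bool) \<Rightarrow> ('a \<Rightarrow> bool) \<Rightarrow> 'a \<Rightarrow> real" where
  "cpXB M X E B = (\<lambda>w. cpX M X (\<lambda>v. E v \<and> B v) w / cpX M X B w)"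

definition cond_indep_X :: "'a measure \<Rightarrow> ('a \<Rightarrow> 'x::topological_space) \<Rightarrow> ('a \<Rightarrow> 'u) \<Rightarrow> ('a \<Rightarrow> 'v) \<Rightarrow> bool" where
  "cond_indep_X M X U V \<longleftrightarrow>
     (\<forall>u v. AE w in M. cpX M X (\<lambda>z. U z = u \<and> V z = v) w
                        = cpX M X (\<lambda>z. U z = u) w * cpX M X (\<lambda>z. V z = v) w)"

end

theory Submission
  imports Defs
begin

text \<open>By monotonicity, the cross-world event \<open>Y(1,M(0)) = 0, Y(0,M(0)) = 0, Y(1,M(1)) = 1, M(1) = 1\<close>
  coincides with \<open>M(0) = 0, M(1) = 1, Y(1,0) = 0, Y(1,1) = 1\<close>, so the conditional independence (b)
  splits \<open>\<psi>\<close> into an outcome factor and a mediator factor. Each factor has the form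
  \<open>P(F = 0 | G = 1, X) = 1 - P(F | X) / P(G | X)\<close> with \<open>F \<le> G\<close>. The independences (a), (b) together
  with consistency identify \<open>P(Y(1,m) | X)\<close> with \<open>\<mu>\<^sub>1\<^sub>m\<close> and \<open>P(M(a) | X)\<close> with \<open>\<gamma>\<^sub>a\<close>;
  positivity (c) and (A6) keep all denominators away from zero.\<close>

lemma measurable_Pair_count_space:
  fixes f :: "'a \<Rightarrow> 'b::countable" and g :: "'a \<Rightarrow> 'c::countable"
  assumes "f \<in> measurable M (count_space UNIV)" "g \<in> measurable M (count_space UNIV)"
  shows "(\<lambda>z. (f z, g z)) \<in> measurable M (count_space UNIV)"
  unfolding measurable_count_space_eq2_countable
proof (intro conjI ballI)
  fix p :: "'b \<times> 'c"
  have "(\<lambda>z. (f z, g z)) -` {p} \<inter> space M = (f -` {fst p} \<inter> space M) \<inter> (g -` {snd p} \<inter> space M)"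
    by (cases p) auto
  then show "(\<lambda>z. (f z, g z)) -` {p} \<inter> space M \<in> sets M"
    using assms by (simp add: measurable_sets Int)
qed simp

locale covariate_prob_space = prob_space M for M :: "'a measure" +
  fixes X :: "'a \<Rightarrow> 'x::topological_space"
  assumes X_measurable: "X \<in> borel_measurable M"
begin

lemma sigma_finite_subalgebra_covariate: "sigma_finite_subalgebra M (vimage_algebra (space M) X borel)"
proof -
  have "subalgebra M (vimage_algebra (space M) X borel)"
    unfolding subalgebra_def using sets_image_in_sets[OF refl X_measurable] by simp
  then show ?thesis
    by (intro finite_measure_subalgebra_is_sigma_finite)
       (simp add: finite_measure_axioms finite_measure_subalgebra_axioms.intro finite_measure_subalgebra_def)
qed

interpretation covariate: sigma_finite_subalgebra M "vimage_algebra (space M) X borel"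
  by (rule sigma_finite_subalgebra_covariate)

lemma integrable_event_indicator:
  "Measurable.pred M E \<Longrightarrow> integrable M (indicator {w \<in> space M. E w} :: 'a \<Rightarrow> real)"
  by (drule predE) (simp add: less_top[symmetric])

lemma cpX_cong: "(\<And>w. w \<in> space M \<Longrightarrow> E w \<longleftrightarrow> G w) \<Longrightarrow> cpX M X E = cpX M X G"
  unfolding cpX_def by (metis (mono_tags, lifting) Collect_cong)

lemma cpX_disj:
  assumes "Measurable.pred M E" "Measurable.pred M G" "\<And>w. w \<in> space M \<Longrightarrow> \<not> (E w \<and> G w)"
  shows "AE w in M. cpX M X (\<lambda>z. E z \<or> G z) w = cpX M X E w + cpX M X G w"
proof -
  have "(indicator {w \<in> space M. E w \<or> G w} :: 'a \<Rightarrow> real)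
      = (\<lambda>w. indicator {w \<in> space M. E w} w + indicator {w \<in> space M. G w} w)"
    using assms(3) by (force simp: indicator_def)
  then show ?thesis
    unfolding cpX_def using assms by (auto intro!: covariate.real_cond_exp_add integrable_event_indicator)
qed

lemma cpX_eq_0: "(\<And>w. w \<in> space M \<Longrightarrow> \<not> E w) \<Longrightarrow> AE w in M. cpX M X E w = 0"
proof -
  assume "\<And>w. w \<in> space M \<Longrightarrow> \<not> E w"
  then have "(indicator {w \<in> space M. E w} :: 'a \<Rightarrow> real) = (\<lambda>_. 0)"
    by (auto simp: indicator_def)
  then show ?thesis
    unfolding cpX_def by (auto intro: covariate.real_cond_exp_F_meas)
qed


lemma cond_indep_X_point_set:
  fixes U :: "'a \<Rightarrow> 'u" and V :: "'a \<Rightarrow> 'v::finite"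
  assumes ci: "cond_indep_X M X U V"
    and [measurable]: "U \<in> measurable M (count_space UNIV)" "V \<in> measurable M (count_space UNIV)"
  shows "AE w in M. cpX M X (\<lambda>z. U z = u \<and> V z \<in> T) w = cpX M X (\<lambda>z. U z = u) w * cpX M X (\<lambda>z. V z \<in> T) w"
proof (induction T rule: finite_induct[OF finite])
  case 1
  have "AE w in M. cpX M X (\<lambda>z. U z = u \<and> V z \<in> {}) w = 0" "AE w in M. cpX M X (\<lambda>z. V z \<in> {}) w = 0"
    by (simp_all add: cpX_eq_0)
  then show ?case by eventually_elim simp
next
  case (2 v T)
  have joint: "cpX M X (\<lambda>z. U z = u \<and> V z \<in> insert v T) = cpX M X (\<lambda>z. (U z = u \<and> V z = v) \<or> (U z = u \<and> V z \<in> T))"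
    and marginal: "cpX M X (\<lambda>z. V z \<in> insert v T) = cpX M X (\<lambda>z. V z = v \<or> V z \<in> T)"
    by (auto intro: cpX_cong)
  have "AE w in M. cpX M X (\<lambda>z. (U z = u \<and> V z = v) \<or> (U z = u \<and> V z \<in> T)) w
      = cpX M X (\<lambda>z. U z = u \<and> V z = v) w + cpX M X (\<lambda>z. U z = u \<and> V z \<in> T) w"
    "AE w in M. cpX M X (\<lambda>z. V z = v \<or> V z \<in> T) w = cpX M X (\<lambda>z. V z = v) w + cpX M X (\<lambda>z. V z \<in> T) w"
    using \<open>v \<notin> T\<close> by (auto intro!: cpX_disj)
  moreover have "AE w in M. cpX M X (\<lambda>z. U z = u \<and> V z = v) w = cpX M X (\<lambda>z. U z = u) w * cpX M X (\<lambda>z. V z = v) w"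
    using ci unfolding cond_indep_X_def by blast
  ultimately show ?case
    unfolding joint marginal using 2(3) by eventually_elim (simp add: distrib_left)
qed

lemma cond_indep_X_sets:
  fixes U :: "'a \<Rightarrow> 'u::finite" and V :: "'a \<Rightarrow> 'v::finite"
  assumes ci: "cond_indep_X M X U V"
    and [measurable]: "U \<in> measurable M (count_space UNIV)" "V \<in> measurable M (count_space UNIV)"
  shows "AE w in M. cpX M X (\<lambda>z. U z \<in> S \<and> V z \<in> T) w = cpX M X (\<lambda>z. U z \<in> S) w * cpX M X (\<lambda>z. V z \<in> T) w"
proof (induction S rule: finite_induct[OF finite])
  case 1
  have "AE w in M. cpX M X (\<lambda>z. U z \<in> {} \<and> V z \<in> T) w = 0" "AE w in M. cpX M X (\<lambda>z. U z \<in> {}) w = 0"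
    by (simp_all add: cpX_eq_0)
  then show ?case by eventually_elim simp
next
  case (2 u S)
  have joint: "cpX M X (\<lambda>z. U z \<in> insert u S \<and> V z \<in> T) = cpX M X (\<lambda>z. (U z = u \<and> V z \<in> T) \<or> (U z \<in> S \<and> V z \<in> T))"
    and marginal: "cpX M X (\<lambda>z. U z \<in> insert u S) = cpX M X (\<lambda>z. U z = u \<or> U z \<in> S)"
    by (auto intro: cpX_cong)
  have "AE w in M. cpX M X (\<lambda>z. (U z = u \<and> V z \<in> T) \<or> (U z \<in> S \<and> V z \<in> T)) w
      = cpX M X (\<lambda>z. U z = u \<and> V z \<in> T) w + cpX M X (\<lambda>z. U z \<in> S \<and> V z \<in> T) w"
    "AE w in M. cpX M X (\<lambda>z. U z = u \<or> U z \<in> S) w = cpX M X (\<lambda>z. U z = u) w + cpX M X (\<lambda>z. U z \<in> S) w"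
    using \<open>u \<notin> S\<close> by (auto intro!: cpX_disj)
  moreover note cond_indep_X_point_set[OF assms, of u T]
  ultimately show ?case
    unfolding joint marginal using 2(3) by eventually_elim (simp add: distrib_right)
qed

lemma cpX_cond_indep:
  fixes U :: "'a \<Rightarrow> 'u::finite" and V :: "'a \<Rightarrow> 'v::finite"
  assumes "cond_indep_X M X U V"
    and "U \<in> measurable M (count_space UNIV)" "V \<in> measurable M (count_space UNIV)"
    and "\<And>w. w \<in> space M \<Longrightarrow> E w \<longleftrightarrow> U w \<in> S \<and> V w \<in> T"
    and "\<And>w. w \<in> space M \<Longrightarrow> F w \<longleftrightarrow> U w \<in> S"
    and "\<And>w. w \<in> space M \<Longrightarrow> G w \<longleftrightarrow> V w \<in> T"
  shows "AE w in M. cpX M X E w = cpX M X F w * cpX M X G w"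
proof -
  have "cpX M X E = cpX M X (\<lambda>z. U z \<in> S \<and> V z \<in> T)" "cpX M X F = cpX M X (\<lambda>z. U z \<in> S)"
    "cpX M X G = cpX M X (\<lambda>z. V z \<in> T)"
    using assms(4-6) by (auto intro: cpX_cong)
  then show ?thesis
    using cond_indep_X_sets[OF assms(1-3)] by simp
qed

lemma cpXB_complement:
  assumes [measurable]: "Measurable.pred M F" "Measurable.pred M B"
    and "\<And>w. w \<in> space M \<Longrightarrow> F w \<Longrightarrow> B w"
  shows "AE w in M. cpX M X B w \<noteq> 0 \<longrightarrow> cpXB M X (\<lambda>z. \<not> F z) B w = 1 - cpX M X F w / cpX M X B w"
proof -
  have split: "cpX M X B = cpX M X (\<lambda>z. F z \<or> (\<not> F z \<and> B z))"
    using assms(3) by (auto intro: cpX_cong)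
  have "AE w in M. cpX M X (\<lambda>z. F z \<or> (\<not> F z \<and> B z)) w = cpX M X F w + cpX M X (\<lambda>z. \<not> F z \<and> B z) w"
    by (rule cpX_disj) auto
  then show ?thesis
    unfolding cpXB_def split by eventually_elim (simp add: field_simps)
qed

end

locale mediation_model = covariate_prob_space M X for M :: "'a measure" and X :: "'a \<Rightarrow> 'x::topological_space" +
  fixes A Mv Y :: "'a \<Rightarrow> bool"
    and Yp :: "bool \<Rightarrow> bool \<Rightarrow> 'a \<Rightarrow> bool"
    and Mp :: "bool \<Rightarrow> 'a \<Rightarrow> bool"
  assumes A_measurable: "A \<in> measurable M (count_space UNIV)"
    and Mv_measurable: "Mv \<in> measurable M (count_space UNIV)"
    and Y_measurable: "Y \<in> measurable M (count_space UNIV)"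
    and Yp_measurable: "\<And>a m. Yp a m \<in> measurable M (count_space UNIV)"
    and Mp_measurable: "\<And>a. Mp a \<in> measurable M (count_space UNIV)"
    and Y_consistent: "\<And>w a m. w \<in> space M \<Longrightarrow> A w = a \<Longrightarrow> Mv w = m \<Longrightarrow> Y w = Yp a m w"
    and Mv_consistent: "\<And>w a. w \<in> space M \<Longrightarrow> A w = a \<Longrightarrow> Mv w = Mp a w"
    and Y_mono_exposure: "\<And>w. w \<in> space M \<Longrightarrow> Yp False False w \<Longrightarrow> Yp True False w"
    and Y_mono_mediator: "\<And>w. w \<in> space M \<Longrightarrow> Yp True False w \<Longrightarrow> Yp True True w"
    and Mp_mono: "\<And>w. w \<in> space M \<Longrightarrow> Mp False w \<Longrightarrow> Mp True w"
    and exposure_ignorable: "cond_indep_X M X A (\<lambda>z. (Yp True True z, Yp True False z, Mp False z, Mp True z))"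
    and mediator_ignorable: "cond_indep_X M X (\<lambda>z. (Mp False z, Mp True z)) (\<lambda>z. (Yp True False z, Yp True True z))"
begin

declare A_measurable[measurable] Mv_measurable[measurable] Y_measurable[measurable]
  Yp_measurable[measurable] Mp_measurable[measurable]

lemma potentials_measurable:
  "(\<lambda>z. (Yp True True z, Yp True False z, Mp False z, Mp True z)) \<in> measurable M (count_space UNIV)"
  "(\<lambda>z. (Mp False z, Mp True z)) \<in> measurable M (count_space UNIV)"
  "(\<lambda>z. (Yp True False z, Yp True True z)) \<in> measurable M (count_space UNIV)"
  by (intro measurable_Pair_count_space Yp_measurable Mp_measurable)+

lemma Mv_eq: "w \<in> space M \<Longrightarrow> Mv w = Mp (A w) w"
  using Mv_consistent by blast

lemma Y_eq: "w \<in> space M \<Longrightarrow> Y w = Yp (A w) (Mp (A w) w) w"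
  using Y_consistent Mv_eq by blast

lemmas exposure_factor = cpX_cond_indep[OF exposure_ignorable A_measurable potentials_measurable(1)]
lemmas mediator_factor = cpX_cond_indep[OF mediator_ignorable potentials_measurable(2,3)]

lemma cpX_Y11_M1: "AE w in M. cpX M X (\<lambda>z. Yp True True z \<and> Mp True z) w = cpX M X (Mp True) w * cpX M X (Yp True True) w"
  by (rule mediator_factor[where S="{p. snd p}" and T="{p. snd p}"]) auto

lemma cpX_Y10_not_M1: "AE w in M. cpX M X (\<lambda>z. Yp True False z \<and> \<not> Mp True z) w = cpX M X (\<lambda>z. \<not> Mp True z) w * cpX M X (Yp True False) w"
  by (rule mediator_factor[where S="{p. \<not> snd p}" and T="{p. fst p}"]) auto

lemma cpX_treated_mediated: "AE w in M. cpX M X (\<lambda>z. A z \<and> Mv z) w = cpX M X A w * cpX M X (Mp True) w"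
  by (rule exposure_factor[where S="{True}" and T="{t. snd (snd (snd t))}"]) (auto simp: Mv_eq)

lemma mu11_identified:
  "AE w in M. cpX M X (\<lambda>z. A z \<and> Mv z) w \<noteq> 0 \<longrightarrow> cpXB M X Y (\<lambda>z. A z \<and> Mv z) w = cpX M X (Yp True True) w"
proof -
  have "AE w in M. cpX M X (\<lambda>z. Y z \<and> A z \<and> Mv z) w = cpX M X A w * cpX M X (\<lambda>z. Yp True True z \<and> Mp True z) w"
    by (rule exposure_factor[where S="{True}" and T="{t. fst t \<and> snd (snd (snd t))}"]) (auto simp: Mv_eq Y_eq)
  with cpX_Y11_M1 cpX_treated_mediated show ?thesis
    unfolding cpXB_def by eventually_elim (auto simp: field_simps)
qed

lemma mu10_identified:
  "AE w in M. cpX M X (\<lambda>z. A z \<and> \<not> Mv z) w \<noteq> 0 \<longrightarrow> cpXB M X Y (\<lambda>z. A z \<and> \<not> Mv z) w = cpX M X (Yp True False) w"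
proof -
  have "AE w in M. cpX M X (\<lambda>z. Y z \<and> A z \<and> \<not> Mv z) w = cpX M X A w * cpX M X (\<lambda>z. Yp True False z \<and> \<not> Mp True z) w"
    by (rule exposure_factor[where S="{True}" and T="{t. fst (snd t) \<and> \<not> snd (snd (snd t))}"]) (auto simp: Mv_eq Y_eq)
  moreover have "AE w in M. cpX M X (\<lambda>z. A z \<and> \<not> Mv z) w = cpX M X A w * cpX M X (\<lambda>z. \<not> Mp True z) w"
    by (rule exposure_factor[where S="{True}" and T="{t. \<not> snd (snd (snd t))}"]) (auto simp: Mv_eq)
  ultimately show ?thesis
    using cpX_Y10_not_M1 unfolding cpXB_def by eventually_elim (auto simp: field_simps)
qed

lemma gamma1_identified:
  "AE w in M. cpX M X A w \<noteq> 0 \<longrightarrow> cpXB M X Mv A w = cpX M X (Mp True) w"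
proof -
  have "AE w in M. cpX M X (\<lambda>z. Mv z \<and> A z) w = cpX M X A w * cpX M X (Mp True) w"
    by (rule exposure_factor[where S="{True}" and T="{t. snd (snd (snd t))}"]) (auto simp: Mv_eq)
  then show ?thesis
    unfolding cpXB_def by eventually_elim auto
qed

lemma gamma0_identified:
  "AE w in M. cpX M X (\<lambda>z. \<not> A z) w \<noteq> 0 \<longrightarrow> cpXB M X Mv (\<lambda>z. \<not> A z) w = cpX M X (Mp False) w"
proof -
  have "AE w in M. cpX M X (\<lambda>z. Mv z \<and> \<not> A z) w = cpX M X (\<lambda>z. \<not> A z) w * cpX M X (Mp False) w"
    by (rule exposure_factor[where S="{False}" and T="{t. fst (snd (snd t))}"]) (auto simp: Mv_eq)
  then show ?thesis
    unfolding cpXB_def by eventually_elim auto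
qed

lemma psi_factorization:
  "AE w in M.
     cpXB M X (\<lambda>z. \<not> Yp True (Mp False z) z \<and> \<not> Yp False (Mp False z) z) (\<lambda>z. Yp True (Mp True z) z \<and> Mp True z) w
       = cpXB M X (\<lambda>z. \<not> Yp True False z) (Yp True True) w * cpXB M X (\<lambda>z. \<not> Mp False z) (Mp True) w"
proof -
  have numerator: "AE w in M. cpX M X (\<lambda>z. (\<not> Yp True (Mp False z) z \<and> \<not> Yp False (Mp False z) z) \<and> Yp True (Mp True z) z \<and> Mp True z) w
      = cpX M X (\<lambda>z. \<not> Mp False z \<and> Mp True z) w * cpX M X (\<lambda>z. \<not> Yp True False z \<and> Yp True True z) w"
  proof (rule mediator_factor[where S="{(False, True)}" and T="{(False, True)}"])
    fix w assume "w \<in> space M"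
    then show "((\<not> Yp True (Mp False w) w \<and> \<not> Yp False (Mp False w) w) \<and> Yp True (Mp True w) w \<and> Mp True w)
        \<longleftrightarrow> (Mp False w, Mp True w) \<in> {(False, True)} \<and> (Yp True False w, Yp True True w) \<in> {(False, True)}"
      using Y_mono_exposure by (cases "Mp False w"; cases "Mp True w") auto
  qed auto
  have denominator: "cpX M X (\<lambda>z. Yp True (Mp True z) z \<and> Mp True z) = cpX M X (\<lambda>z. Yp True True z \<and> Mp True z)"
    by (rule cpX_cong) auto
  from numerator cpX_Y11_M1 show ?thesis
    unfolding cpXB_def denominator by eventually_elim (simp add: ac_simps)
qed

lemma outcome_complier_fraction:
  "AE w in M. cpX M X (Yp True True) w \<noteq> 0 \<longrightarrow>
     cpXB M X (\<lambda>z. \<not> Yp True False z) (Yp True True) w = 1 - cpX M X (Yp True False) w / cpX M X (Yp True True) w"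
  using Y_mono_mediator by (intro cpXB_complement) auto

lemma mediator_complier_fraction:
  "AE w in M. cpX M X (Mp True) w \<noteq> 0 \<longrightarrow>
     cpXB M X (\<lambda>z. \<not> Mp False z) (Mp True) w = 1 - cpX M X (Mp False) w / cpX M X (Mp True) w"
  using Mp_mono by (intro cpXB_complement) auto

lemma complier_fractions_identified:
  assumes "AE w in M. cpX M X (\<lambda>z. A z \<and> Mv z) w \<noteq> 0"
    and "AE w in M. cpX M X (\<lambda>z. A z \<and> \<not> Mv z) w \<noteq> 0"
    and "AE w in M. cpX M X (\<lambda>z. \<not> A z) w \<noteq> 0"
    and "AE w in M. cpXB M X Y (\<lambda>z. A z \<and> Mv z) w \<noteq> 0"
  shows "AE w in M. cpXB M X (\<lambda>z. \<not> Yp True False z) (Yp True True) w * cpXB M X (\<lambda>z. \<not> Mp False z) (Mp True) w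
      = (1 - cpXB M X Y (\<lambda>z. A z \<and> \<not> Mv z) w / cpXB M X Y (\<lambda>z. A z \<and> Mv z) w)
        * (1 - cpXB M X Mv (\<lambda>z. \<not> A z) w / cpXB M X Mv A w)"
  using assms mu11_identified mu10_identified gamma1_identified gamma0_identified cpX_treated_mediated
    outcome_complier_fraction mediator_complier_fraction
proof eventually_elim
  case (elim w)
  then have "cpX M X A w \<noteq> 0" "cpX M X (Mp True) w \<noteq> 0" "cpX M X (Yp True True) w \<noteq> 0"
    by auto
  with elim show ?case
    by simp
qed

end

theorem mainTheorem4:
  fixes M :: "'a measure"
    and X :: "'a \<Rightarrow> real ^ 'd"
    and A Mv Y :: "'a \<Rightarrow> bool"
    and Yp :: "bool \<Rightarrow> bool \<Rightarrow> 'a \<Rightarrow> bool"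
    and Mp :: "bool \<Rightarrow> 'a \<Rightarrow> bool"
  assumes prob: "prob_space M"
    and X_meas: "X \<in> borel_measurable M"
    and A_meas: "A \<in> measurable M (count_space UNIV)"
    and Mv_meas: "Mv \<in> measurable M (count_space UNIV)"
    and Y_meas: "Y \<in> measurable M (count_space UNIV)"
    and Yp_meas: "\<And>a m. Yp a m \<in> measurable M (count_space UNIV)"
    and Mp_meas: "\<And>a. Mp a \<in> measurable M (count_space UNIV)"
    \<comment> \<open>(A1) consistency\<close>
    and A1_Y: "\<And>w a m. w \<in> space M \<Longrightarrow> A w = a \<Longrightarrow> Mv w = m \<Longrightarrow> Y w = Yp a m w"
    and A1_M: "\<And>w a. w \<in> space M \<Longrightarrow> A w = a \<Longrightarrow> Mv w = Mp a w"
    \<comment> \<open>(A2) monotonicity\<close>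
    and A2: "\<And>w. w \<in> space M \<Longrightarrow>
               (Yp True False w \<longrightarrow> Yp True True w) \<and> (Yp False False w \<longrightarrow> Yp True False w)
             \<and> (Yp False True w \<longrightarrow> Yp True True w) \<and> (Mp False w \<longrightarrow> Mp True w)"
    \<comment> \<open>(A6)\<close>
    and A6: "\<exists>\<epsilon>>0. AE w in M. cpXB M X Y (\<lambda>z. A z \<and> Mv z) w \<ge> \<epsilon>"
    \<comment> \<open>(a)\<close>
    and ci_a: "cond_indep_X M X A (\<lambda>z. (Yp True True z, Yp True False z, Mp False z, Mp True z))"
    \<comment> \<open>(b)\<close>
    and ci_b: "cond_indep_X M X (\<lambda>z. (Mp False z, Mp True z)) (\<lambda>z. (Yp True False z, Yp True True z))"
    \<comment> \<open>(c) positivity\<close>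
    and pos: "\<exists>\<epsilon>>0. (\<forall>m. AE w in M. cpX M X (\<lambda>z. A z \<and> Mv z = m) w \<ge> \<epsilon>)
                    \<and> (AE w in M. cpX M X (\<lambda>z. \<not> A z) w \<ge> \<epsilon>)"
  shows "AE w in M.
           cpXB M X (\<lambda>z. \<not> Yp True (Mp False z) z \<and> \<not> Yp False (Mp False z) z)
                    (\<lambda>z. Yp True (Mp True z) z \<and> Mp True z) w
             = cpXB M X (\<lambda>z. \<not> Yp True False z) (\<lambda>z. Yp True True z) w
               * cpXB M X (\<lambda>z. \<not> Mp False z) (\<lambda>z. Mp True z) w
         \<and> cpXB M X (\<lambda>z. \<not> Yp True False z) (\<lambda>z. Yp True True z) w
               * cpXB M X (\<lambda>z. \<not> Mp False z) (\<lambda>z. Mp True z) w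
             = (1 - cpXB M X Y (\<lambda>z. A z \<and> \<not> Mv z) w / cpXB M X Y (\<lambda>z. A z \<and> Mv z) w)
               * (1 - cpXB M X Mv (\<lambda>z. \<not> A z) w / cpXB M X Mv (\<lambda>z. A z) w)"
proof -
  interpret covariate_prob_space M X
    using prob X_meas by (simp add: covariate_prob_space_def covariate_prob_space_axioms_def)
  interpret mediation_model M X A Mv Y Yp Mp
    by unfold_locales (fact assms | use A2 in blast)+
  obtain \<epsilon>\<^sub>1 where "\<epsilon>\<^sub>1 > 0" and mu11_ge: "AE w in M. cpXB M X Y (\<lambda>z. A z \<and> Mv z) w \<ge> \<epsilon>\<^sub>1"
    using A6 by blast
  obtain \<epsilon>\<^sub>2 where "\<epsilon>\<^sub>2 > 0" and pos_A_Mv: "\<And>m. AE w in M. cpX M X (\<lambda>z. A z \<and> Mv z = m) w \<ge> \<epsilon>\<^sub>2"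
    and pos_not_A: "AE w in M. cpX M X (\<lambda>z. \<not> A z) w \<ge> \<epsilon>\<^sub>2"
    using pos by blast
  have "AE w in M. cpX M X (\<lambda>z. A z \<and> Mv z) w \<noteq> 0"
    using pos_A_Mv[of True] by eventually_elim (use \<open>\<epsilon>\<^sub>2 > 0\<close> in auto)
  moreover have "AE w in M. cpX M X (\<lambda>z. A z \<and> \<not> Mv z) w \<noteq> 0"
    using pos_A_Mv[of False] by eventually_elim (use \<open>\<epsilon>\<^sub>2 > 0\<close> in auto)
  moreover have "AE w in M. cpX M X (\<lambda>z. \<not> A z) w \<noteq> 0"
    using pos_not_A by eventually_elim (use \<open>\<epsilon>\<^sub>2 > 0\<close> in auto)
  moreover have "AE w in M. cpXB M X Y (\<lambda>z. A z \<and> Mv z) w \<noteq> 0"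
    using mu11_ge by eventually_elim (use \<open>\<epsilon>\<^sub>1 > 0\<close> in auto)
  ultimately have "AE w in M. cpXB M X (\<lambda>z. \<not> Yp True False z) (Yp True True) w * cpXB M X (\<lambda>z. \<not> Mp False z) (Mp True) w
      = (1 - cpXB M X Y (\<lambda>z. A z \<and> \<not> Mv z) w / cpXB M X Y (\<lambda>z. A z \<and> Mv z) w)
        * (1 - cpXB M X Mv (\<lambda>z. \<not> A z) w / cpXB M X Mv A w)"
    by (rule complier_fractions_identified)
  with psi_factorization show ?thesis
    by eventually_elim simp
qed

end
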